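(* Let $G_1,\dots,G_n$ be groups and $G\leqslant G_1\times\dots\times G_n$ a subgroup such that each projection $G\to G_i$ is surjective. For $j\in\{1,\dots,n\}$ let $S_j=\{1,\dots,n\}\setminus\{j\}$, view $G$ as a subgroup of $G_j\times G_{S_j}$ (surjecting onto both factors), and let $Q_j=G_j/N_j$ be the associated Goursat quotient, where $N_j=\{x\in G_j:(x,1)\in G\}$. Then $G$ has abelian entanglements with respect to $G_1\times\dots\times G_n$ if and only if $Q_j$ is abelian for every $j\in\{1,\dots,n\}$.
   Context: For nonempty $S\subseteq\{1,\dots,n\}$, $G_S$ denotes the image of $G$ in $\prod_{i\in S}G_i$ (and $G_\emptyset$ is the trivial group). For a partition $\mathcal P=\{S,T\}$ of $\{1,\dots,n\}$ into two nonempty sets, $G\leqslant G_S\times G_T$ surjects onto both factors; with $N_S=\{x\in G_S:(x,1)\in G\}$ (normal in $G_S$) the Goursat quotient is $Q_{\mathcal P}=G_S/N_S$. $G$ has abelian entanglements with respect to $G_1\times\dots\times G_n$ if $Q_{\mathcal P}$ is abelian for every such partition $\mathcal P$. *)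

theory Defs
  imports "HOL-Algebra.Algebra"
begin

text \<open>G is a subgroup H of product_group I Gs (I = {1..n}); elements are
  extensional functions on I.\<close>

definition proj_image :: "('i \<Rightarrow> 'a) set \<Rightarrow> 'i set \<Rightarrow> ('i \<Rightarrow> 'a) set" where
  "proj_image H S = (\<lambda>x. restrict x S) ` H"

definition goursat_kernel ::
  "'i set \<Rightarrow> ('i \<Rightarrow> ('a, 'c) monoid_scheme) \<Rightarrow> ('i \<Rightarrow> 'a) set \<Rightarrow> 'i set \<Rightarrow> ('i \<Rightarrow> 'a) set" where
  "goursat_kernel I Gs H S =
     {y \<in> proj_image H S. (\<lambda>i\<in>I. if i \<in> S then y i else \<one>\<^bsub>Gs i\<^esub>) \<in> H}"

definition goursat_quotient ::
  "'i set \<Rightarrow> ('i \<Rightarrow> ('a, 'c) monoid_scheme) \<Rightarrow> ('i \<Rightarrow> 'a) set \<Rightarrow> 'i set \<Rightarrow> ('i \<Rightarrow> 'a) set monoid" where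
  "goursat_quotient I Gs H S =
     subgroup_generated (product_group S Gs) (proj_image H S) Mod goursat_kernel I Gs H S"

definition abelian_entanglements ::
  "'i set \<Rightarrow> ('i \<Rightarrow> ('a, 'c) monoid_scheme) \<Rightarrow> ('i \<Rightarrow> 'a) set \<Rightarrow> bool" where
  "abelian_entanglements I Gs H \<longleftrightarrow>
     (\<forall>S T. S \<noteq> {} \<and> T \<noteq> {} \<and> S \<inter> T = {} \<and> S \<union> T = I \<longrightarrow>
        comm_group (goursat_quotient I Gs H S))"

definition coord_kernel ::
  "'i set \<Rightarrow> ('i \<Rightarrow> ('a, 'c) monoid_scheme) \<Rightarrow> ('i \<Rightarrow> 'a) set \<Rightarrow> 'i \<Rightarrow> 'a set" where
  "coord_kernel I Gs H j =
     {x \<in> carrier (Gs j). (\<lambda>i\<in>I. if i = j then x else \<one>\<^bsub>Gs i\<^esub>) \<in> H}"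

end

theory Submission
  imports Defs
begin

text \<open>
  A quotient \<open>G/N\<close> is abelian iff \<open>N\<close> contains the derived subgroup, and the derived subgroup
  of a surjective image is the image of the derived subgroup. Since \<open>N\<^sub>S\<close> and \<open>N\<^sub>j\<close> are the
  images of the elements of \<open>G\<close> trivial off \<open>S\<close> resp. off \<open>j\<close>, both kinds of quotients are
  abelian iff every commutator \<open>d\<close> of \<open>G\<close> has its \<open>S\<close>-part in \<open>N\<^sub>S\<close> resp. its \<open>j\<close>-th
  coordinate in \<open>N\<^sub>j\<close>. For \<open>S = {j}\<close> these conditions coincide. Conversely, if \<open>d\<^sub>j \<in> N\<^sub>j\<close>
  for all \<open>j\<close> in the finite set \<open>T\<close>, the element agreeing with \<open>d\<close> on \<open>T\<close> and trivial on
  \<open>S\<close> is a product of elements of \<open>G\<close> supported on single coordinates, so dividing \<open>d\<close>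
  by it gives an element of \<open>G\<close> trivial on \<open>T\<close> with the same \<open>S\<close>-part as \<open>d\<close>.
\<close>

lemma (in normal) comm_group_Mod_iff_derived_subset:
  "comm_group (G Mod H) \<longleftrightarrow> derived G (carrier G) \<subseteq> H"
proof
  assume "comm_group (G Mod H)"
  then show "derived G (carrier G) \<subseteq> H"
    using derived_minimal normal_axioms by blast
next
  assume derived_H: "derived G (carrier G) \<subseteq> H"
  show "comm_group (G Mod H)"
  proof (rule group.group_comm_groupI[OF factorgroup_is_group])
    fix A B assume "A \<in> carrier (G Mod H)" "B \<in> carrier (G Mod H)"
    then obtain x y where xy: "x \<in> carrier G" "y \<in> carrier G" and "A = H #> x" "B = H #> y"
      by (auto simp: carrier_FactGroup)
    have "x \<otimes> y \<otimes> inv x \<otimes> inv y \<in> derived G (carrier G)"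
      using xy unfolding derived_def by (blast intro: generate.incl)
    then have "x \<otimes> y \<otimes> inv (y \<otimes> x) \<in> H"
      using derived_H xy by (auto simp: inv_mult_group m_assoc)
    then have "H #> (x \<otimes> y) = H #> (y \<otimes> x)"
      using xy by (metis m_closed rcos_module_rev repr_independence subgroup_axioms is_group)
    then show "A \<otimes>\<^bsub>G Mod H\<^esub> B = B \<otimes>\<^bsub>G Mod H\<^esub> A"
      using \<open>A = H #> x\<close> \<open>B = H #> y\<close> xy by (simp add: FactGroup_def rcos_sum)
  qed
qed

lemma (in group_hom) comm_group_Mod_image_iff:
  assumes surj: "h ` carrier G = carrier H" and N: "N \<lhd> G"
  shows "comm_group (H Mod h ` N) \<longleftrightarrow> h ` derived G (carrier G) \<subseteq> h ` N"
proof -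
  have "h ` N \<lhd> H"
    using normal.surj_hom_normal_subgroup[OF N group_hom_axioms surj] .
  moreover have "derived H (carrier H) = h ` derived G (carrier G)"
    using derived_img[of "carrier G"] surj by simp
  ultimately show ?thesis
    by (simp add: normal.comm_group_Mod_iff_derived_subset)
qed

locale subdirect_product =
  fixes I :: "'i set" and Gs :: "'i \<Rightarrow> ('a, 'c) monoid_scheme" and H :: "('i \<Rightarrow> 'a) set"
  assumes groups: "\<And>i. i \<in> I \<Longrightarrow> group (Gs i)"
    and subgroup_H: "subgroup H (product_group I Gs)"
    and coord_surj: "\<And>j. j \<in> I \<Longrightarrow> (\<lambda>h. h j) ` H = carrier (Gs j)"
begin

abbreviation HG :: "('i \<Rightarrow> 'a) monoid" where
  "HG \<equiv> (product_group I Gs)\<lparr>carrier := H\<rparr>"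

definition vanishing_on :: "'i set \<Rightarrow> ('i \<Rightarrow> 'a) set" where
  "vanishing_on T = kernel HG (product_group T Gs) (\<lambda>h. restrict h T)"

lemma group_HG: "group HG"
  using subgroup.subgroup_is_group[OF subgroup_H] groups by simp

lemma derived_subset_H: "derived HG H \<subseteq> H"
  using group.derived_in_carrier[OF group_HG, of H] by simp

lemma H_carrier: "h \<in> H \<Longrightarrow> h \<in> (\<Pi>\<^sub>E i\<in>I. carrier (Gs i))"
  using subgroup.subset[OF subgroup_H] by auto

lemma group_hom_restrict:
  assumes "S \<subseteq> I"
  shows "group_hom HG (product_group S Gs) (\<lambda>h. restrict h S)"
proof (rule group_hom.intro[OF group_HG])
  show "group (product_group S Gs)"
    using groups assms by (intro product_group) auto
  show "group_hom_axioms HG (product_group S Gs) (\<lambda>h. restrict h S)"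
    using assms H_carrier
    by (auto simp: group_hom_axioms_def hom_def PiE_iff Int_absorb1[OF assms] intro!: restrict_ext)
qed

lemma group_hom_coord:
  assumes "j \<in> I"
  shows "group_hom HG (Gs j) (\<lambda>h. h j)"
proof (rule group_hom.intro[OF group_HG])
  show "group (Gs j)"
    using groups assms by auto
  show "group_hom_axioms HG (Gs j) (\<lambda>h. h j)"
    using assms H_carrier by (auto simp: group_hom_axioms_def hom_def PiE_iff)
qed

lemma mem_vanishing_on_iff:
  "h \<in> vanishing_on T \<longleftrightarrow> h \<in> H \<and> (\<forall>i\<in>T. h i = \<one>\<^bsub>Gs i\<^esub>)"
  by (auto simp: vanishing_on_def kernel_def fun_eq_iff)

lemma goursat_kernel_eq_image:
  assumes "S \<subseteq> I"
  shows "goursat_kernel I Gs H S = (\<lambda>h. restrict h S) ` vanishing_on (I - S)"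
proof
  show "goursat_kernel I Gs H S \<subseteq> (\<lambda>h. restrict h S) ` vanishing_on (I - S)"
  proof
    fix y assume "y \<in> goursat_kernel I Gs H S"
    then obtain g where y: "y = restrict g S"
      and "(\<lambda>i\<in>I. if i \<in> S then y i else \<one>\<^bsub>Gs i\<^esub>) \<in> H"
      by (auto simp: goursat_kernel_def proj_image_def)
    then have "(\<lambda>i\<in>I. if i \<in> S then y i else \<one>\<^bsub>Gs i\<^esub>) \<in> vanishing_on (I - S)"
      by (simp add: mem_vanishing_on_iff)
    moreover have "y = restrict (\<lambda>i\<in>I. if i \<in> S then y i else \<one>\<^bsub>Gs i\<^esub>) S"
      using y by (auto simp: Int_absorb1[OF assms] intro!: restrict_ext)
    ultimately show "y \<in> (\<lambda>h. restrict h S) ` vanishing_on (I - S)"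
      by blast
  qed
next
  show "(\<lambda>h. restrict h S) ` vanishing_on (I - S) \<subseteq> goursat_kernel I Gs H S"
  proof clarify
    fix h assume "h \<in> vanishing_on (I - S)"
    then have "h \<in> H" and "\<forall>i\<in>I - S. h i = \<one>\<^bsub>Gs i\<^esub>"
      by (auto simp: mem_vanishing_on_iff)
    moreover have "(\<lambda>i\<in>I. if i \<in> S then restrict h S i else \<one>\<^bsub>Gs i\<^esub>) = h"
      using calculation H_carrier[of h] by (auto simp: PiE_iff extensional_def)
    ultimately show "restrict h S \<in> goursat_kernel I Gs H S"
      by (auto simp: goursat_kernel_def proj_image_def)
  qed
qed

lemma coord_kernel_eq_image:
  assumes "j \<in> I"
  shows "coord_kernel I Gs H j = (\<lambda>h. h j) ` vanishing_on (I - {j})"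
proof
  show "coord_kernel I Gs H j \<subseteq> (\<lambda>h. h j) ` vanishing_on (I - {j})"
  proof
    fix x assume "x \<in> coord_kernel I Gs H j"
    then have "(\<lambda>i\<in>I. if i = j then x else \<one>\<^bsub>Gs i\<^esub>) \<in> vanishing_on (I - {j})"
      by (auto simp: coord_kernel_def mem_vanishing_on_iff)
    then show "x \<in> (\<lambda>h. h j) ` vanishing_on (I - {j})"
      by (rule rev_image_eqI) (simp add: assms)
  qed
next
  show "(\<lambda>h. h j) ` vanishing_on (I - {j}) \<subseteq> coord_kernel I Gs H j"
  proof clarify
    fix h assume "h \<in> vanishing_on (I - {j})"
    then have "h \<in> H" and "\<forall>i\<in>I - {j}. h i = \<one>\<^bsub>Gs i\<^esub>"
      by (auto simp: mem_vanishing_on_iff)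
    moreover have "(\<lambda>i\<in>I. if i = j then h j else \<one>\<^bsub>Gs i\<^esub>) = h"
      using calculation H_carrier[of h] by (auto simp: PiE_iff extensional_def)
    ultimately show "h j \<in> coord_kernel I Gs H j"
      using assms H_carrier[of h] by (auto simp: coord_kernel_def)
  qed
qed

lemma comm_goursat_quotient_iff:
  assumes "S \<subseteq> I"
  shows "comm_group (goursat_quotient I Gs H S) \<longleftrightarrow>
    (\<forall>d \<in> derived HG H. restrict d S \<in> goursat_kernel I Gs H S)"
proof -
  let ?GS = "subgroup_generated (product_group S Gs) (proj_image H S)"
  have restrict_hom: "group_hom HG (product_group S Gs) (\<lambda>h. restrict h S)"
    using group_hom_restrict[OF assms] .
  then have "subgroup (proj_image H S) (product_group S Gs)"
    using group_hom.img_is_subgroup by (fastforce simp: proj_image_def)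
  then have carrier_GS: "carrier ?GS = proj_image H S"
    by (rule subgroup.carrier_subgroup_generated_subgroup)
  have "group_hom HG ?GS (\<lambda>h. restrict h S)"
  proof (rule group_hom.intro[OF group_HG])
    show "group ?GS"
      using restrict_hom group_hom.axioms(2) group.group_subgroup_generated by blast
    show "group_hom_axioms HG ?GS (\<lambda>h. restrict h S)"
      using restrict_hom carrier_GS
      by (auto simp: group_hom_axioms_def group_hom_def hom_into_subgroup proj_image_def)
  qed
  moreover have "(\<lambda>h. restrict h S) ` carrier HG = carrier ?GS"
    using carrier_GS by (simp add: proj_image_def)
  moreover have "vanishing_on (I - S) \<lhd> HG"
    using group_hom.normal_kernel[OF group_hom_restrict[of "I - S"]] by (simp add: vanishing_on_def)
  ultimately show ?thesis
    using assms by (simp add: goursat_quotient_def goursat_kernel_eq_image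
        group_hom.comm_group_Mod_image_iff image_subset_iff)
qed

lemma comm_coord_quotient_iff:
  assumes "j \<in> I"
  shows "comm_group (Gs j Mod coord_kernel I Gs H j) \<longleftrightarrow>
    (\<forall>d \<in> derived HG H. d j \<in> coord_kernel I Gs H j)"
proof -
  have "vanishing_on (I - {j}) \<lhd> HG"
    using group_hom.normal_kernel[OF group_hom_restrict[of "I - {j}"]] by (simp add: vanishing_on_def)
  moreover have "(\<lambda>h. h j) ` carrier HG = carrier (Gs j)"
    using coord_surj[OF assms] by simp
  ultimately show ?thesis
    using group_hom.comm_group_Mod_image_iff[OF group_hom_coord[OF assms]]
    by (simp add: coord_kernel_eq_image[OF assms] image_subset_iff)
qed

lemma restrict_singleton_mem_goursat_kernel_iff:
  assumes "h \<in> H" "j \<in> I"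
  shows "restrict h {j} \<in> goursat_kernel I Gs H {j} \<longleftrightarrow> h j \<in> coord_kernel I Gs H j"
proof -
  have "(\<lambda>i\<in>I. if i \<in> {j} then restrict h {j} i else \<one>\<^bsub>Gs i\<^esub>) =
        (\<lambda>i\<in>I. if i = j then h j else \<one>\<^bsub>Gs i\<^esub>)"
    by auto
  then show ?thesis
    using assms H_carrier[of h] by (auto simp: goursat_kernel_def coord_kernel_def proj_image_def)
qed

lemma coord_kernel_singleton:
  assumes "I = {j}"
  shows "coord_kernel I Gs H j = carrier (Gs j)"
proof -
  have "j \<in> I" and "I - {j} = {}"
    using assms by auto
  moreover have "vanishing_on {} = H"
    by (auto simp: mem_vanishing_on_iff)
  ultimately show ?thesis
    using coord_kernel_eq_image coord_surj by (simp only:)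
qed

lemma mem_H_if_coords_in_coord_kernel:
  assumes "finite F" "F \<subseteq> I" "z \<in> carrier (product_group I Gs)"
    and "\<forall>i\<in>I - F. z i = \<one>\<^bsub>Gs i\<^esub>" "\<forall>i\<in>F. z i \<in> coord_kernel I Gs H i"
  shows "z \<in> H"
  using assms
proof (induction F arbitrary: z rule: finite_induct)
  case empty
  then have "z = \<one>\<^bsub>product_group I Gs\<^esub>"
    by (auto simp: PiE_iff extensional_def)
  then show ?case
    using subgroup.one_closed[OF subgroup_H] by (simp del: one_product_group)
next
  case (insert j F)
  define z' where "z' = (\<lambda>i\<in>I. if i = j then \<one>\<^bsub>Gs i\<^esub> else z i)"
  define e where "e = (\<lambda>i\<in>I. if i = j then z j else \<one>\<^bsub>Gs i\<^esub>)"
  have "z' \<in> H"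
  proof (rule "insert.IH")
    show "z' \<in> carrier (product_group I Gs)"
      using "insert.prems" groups by (auto simp: z'_def PiE_iff group.is_monoid)
  qed (use "insert.prems" "insert.hyps" in \<open>auto simp: z'_def\<close>)
  moreover have "e \<in> H"
    using "insert.prems" by (auto simp: e_def coord_kernel_def)
  moreover have "z = z' \<otimes>\<^bsub>product_group I Gs\<^esub> e"
    using "insert.prems" groups
    by (auto simp: z'_def e_def PiE_iff extensional_def group.is_monoid)
  ultimately show ?case
    using subgroup.m_closed[OF subgroup_H] by (simp del: mult_product_group)
qed

lemma restrict_mem_goursat_kernel:
  assumes S: "S \<subseteq> I" and "finite (I - S)" and h: "h \<in> H"
    and coords: "\<forall>j\<in>I - S. h j \<in> coord_kernel I Gs H j"
  shows "restrict h S \<in> goursat_kernel I Gs H S"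
proof -
  let ?P = "product_group I Gs"
  define z where "z = (\<lambda>i\<in>I. if i \<in> S then \<one>\<^bsub>Gs i\<^esub> else h i)"
  have z_carrier: "z \<in> carrier ?P"
    using H_carrier[OF h] groups by (auto simp: z_def PiE_iff group.is_monoid)
  have "z \<in> H"
    by (rule mem_H_if_coords_in_coord_kernel[of "I - S"])
      (use assms z_carrier in \<open>auto simp: z_def\<close>)
  then have "h \<otimes>\<^bsub>?P\<^esub> inv\<^bsub>?P\<^esub> z \<in> H"
    by (rule subgroup.m_closed[OF subgroup_H h subgroup.m_inv_closed[OF subgroup_H]])
  moreover have "h \<otimes>\<^bsub>?P\<^esub> inv\<^bsub>?P\<^esub> z = (\<lambda>i\<in>I. if i \<in> S then h i else \<one>\<^bsub>Gs i\<^esub>)"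
    using z_carrier H_carrier[OF h] groups
    by (auto simp: z_def PiE_iff group.r_inv group.is_monoid monoid.inv_one intro!: restrict_ext)
  ultimately have "(\<lambda>i\<in>I. if i \<in> S then h i else \<one>\<^bsub>Gs i\<^esub>) \<in> vanishing_on (I - S)"
    by (simp add: mem_vanishing_on_iff)
  moreover have "restrict h S = restrict (\<lambda>i\<in>I. if i \<in> S then h i else \<one>\<^bsub>Gs i\<^esub>) S"
    by (auto simp: Int_absorb1[OF S] intro!: restrict_ext)
  ultimately show ?thesis
    unfolding goursat_kernel_eq_image[OF S] by blast
qed

theorem abelian_entanglements_iff_comm_coord_quotients:
  assumes "finite I"
  shows "abelian_entanglements I Gs H \<longleftrightarrow>
    (\<forall>j\<in>I. comm_group (Gs j Mod coord_kernel I Gs H j))"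
proof
  assume entangled: "abelian_entanglements I Gs H"
  show "\<forall>j\<in>I. comm_group (Gs j Mod coord_kernel I Gs H j)"
  proof
    fix j assume j: "j \<in> I"
    have "d j \<in> coord_kernel I Gs H j" if "d \<in> derived HG H" for d
    proof -
      have d: "d \<in> H"
        using that derived_subset_H by blast
      show ?thesis
      proof (cases "I = {j}")
        case True
        show ?thesis
          unfolding coord_kernel_singleton[OF True] using H_carrier[OF d] j by auto
      next
        case False
        then have "{j} \<noteq> {} \<and> I - {j} \<noteq> {} \<and> {j} \<inter> (I - {j}) = {} \<and> {j} \<union> (I - {j}) = I"
          using j by auto
        then have "comm_group (goursat_quotient I Gs H {j})"
          by (rule entangled[unfolded abelian_entanglements_def, rule_format])
        moreover have "{j} \<subseteq> I"
          using j by simp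
        ultimately have "restrict d {j} \<in> goursat_kernel I Gs H {j}"
          using comm_goursat_quotient_iff that by simp
        then show ?thesis
          using restrict_singleton_mem_goursat_kernel_iff[OF d j] by simp
      qed
    qed
    then show "comm_group (Gs j Mod coord_kernel I Gs H j)"
      using comm_coord_quotient_iff[OF j] by simp
  qed
next
  assume "\<forall>j\<in>I. comm_group (Gs j Mod coord_kernel I Gs H j)"
  then have coords: "\<forall>j\<in>I. \<forall>d\<in>derived HG H. d j \<in> coord_kernel I Gs H j"
    using comm_coord_quotient_iff by blast
  show "abelian_entanglements I Gs H"
    unfolding abelian_entanglements_def
  proof (intro allI impI)
    fix S T assume "S \<noteq> {} \<and> T \<noteq> {} \<and> S \<inter> T = {} \<and> S \<union> T = I"
    then have S: "S \<subseteq> I" by blast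
    have "restrict d S \<in> goursat_kernel I Gs H S" if "d \<in> derived HG H" for d
    proof (rule restrict_mem_goursat_kernel[OF S])
      show "finite (I - S)" and "d \<in> H" and "\<forall>j\<in>I - S. d j \<in> coord_kernel I Gs H j"
        using assms that derived_subset_H coords by auto
    qed
    then show "comm_group (goursat_quotient I Gs H S)"
      using comm_goursat_quotient_iff[OF S] by blast
  qed
qed
end

theorem corollary2p5:
  fixes n :: nat
    and Gs :: "nat \<Rightarrow> ('a, 'c) monoid_scheme"
    and H :: "(nat \<Rightarrow> 'a) set"
  assumes groups: "\<And>i. i \<in> {1..n} \<Longrightarrow> group (Gs i)"
    and sub: "subgroup H (product_group {1..n} Gs)"
    and surj: "\<And>j. j \<in> {1..n} \<Longrightarrow> (\<lambda>x. x j) ` H = carrier (Gs j)"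
  shows "abelian_entanglements {1..n} Gs H \<longleftrightarrow>
         (\<forall>j\<in>{1..n}. comm_group (Gs j Mod coord_kernel {1..n} Gs H j))"
proof -
  interpret subdirect_product "{1..n}" Gs H
    by (rule subdirect_product.intro[OF groups sub surj])
  show ?thesis
    by (rule abelian_entanglements_iff_comm_coord_quotients) simp
qed

end
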